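(* Let $d\ge1$ and let $\rho$ be a finite intensity on $\Omega=B^d_+\times B^d_+$ with total mass $\Lambda>0$ such that $\mu=\rho/\Lambda$ is absolutely continuous with respect to Lebesgue measure on $\mathbb{R}^{2d}$, and assume that neither the green marginal nor the red marginal of $\mu$ (on $\mathbb{R}^d$) is supported on a proper linear subspace of $\mathbb{R}^d$. Then for every measurable map $\phi:[0,1]\to\Omega$ with $\phi_*(\mathrm{Uniform}[0,1])=\mu$, the pullback kernel $W_\phi(u,v)=K(\phi(u),\phi(v))$ on $[0,1]^2$ is not sectionally of bounded variation.
   Context: $B^d_+=\{x\in\mathbb{R}^d:x_k\ge0\ \forall k,\ \|x\|\le1\}$, $\Omega=B^d_+\times B^d_+$; a point $s\in\Omega$ is written $s=(\vec g_s,\vec r_s)$ and $K(s,t)=\vec g_s\cdot\vec r_t$. The green (resp. red) marginal of $\mu$ is its pushforward under $s\mapsto\vec g_s$ (resp. $s\mapsto \vec r_s$). A function $f:[0,1]\to\mathbb{R}$ is in $\mathrm{BV}([0,1])$ if $\sup\sum_{i=1}^k|f(t_i)-f(t_{i-1})|<\infty$ over all partitions $0=t_0<\dots<t_k=1$. A kernel $W:[0,1]^2\to\mathbb{R}$ is sectionally of bounded variation if for almost every $v\in[0,1]$ the function $u\mapsto W(u,v)$ is in $\mathrm{BV}([0,1])$ and for almost every $u\in[0,1]$ the function $v\mapsto W(u,v)$ is in $\mathrm{BV}([0,1])$. *)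

theory Defs
  imports "HOL-Analysis.Analysis"
begin

definition pos_ball :: "(real^'n) set" where
  "pos_ball = {x. (\<forall>k. 0 \<le> x $ k) \<and> norm x \<le> 1}"

text \<open>Omega = B^d_+ x B^d_+; a point s is the pair (green vector, red vector).\<close>
definition Omega :: "((real^'n) \<times> (real^'n)) set" where
  "Omega = pos_ball \<times> pos_ball"

definition K :: "(real^'n) \<times> (real^'n) \<Rightarrow> (real^'n) \<times> (real^'n) \<Rightarrow> real" where
  "K s t = fst s \<bullet> snd t"

definition BV01 :: "(real \<Rightarrow> real) \<Rightarrow> bool" where
  "BV01 f \<longleftrightarrow> (\<exists>B. \<forall>(k::nat) (t::nat \<Rightarrow> real).
      t 0 = 0 \<and> t k = 1 \<and> (\<forall>i<k. t i < t (Suc i)) \<longrightarrow>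
      (\<Sum>i\<in>{1..k}. \<bar>f (t i) - f (t (i - 1))\<bar>) \<le> B)"

definition sectionally_BV :: "(real \<Rightarrow> real \<Rightarrow> real) \<Rightarrow> bool" where
  "sectionally_BV W \<longleftrightarrow>
     (AE v in lebesgue. v \<in> {0..1} \<longrightarrow> BV01 (\<lambda>u. W u v)) \<and>
     (AE u in lebesgue. u \<in> {0..1} \<longrightarrow> BV01 (\<lambda>v. W u v))"

definition unif01 :: "real measure" where
  "unif01 = uniform_measure (restrict_space lebesgue {0..1}) {0..1}"

definition supported_on :: "'a measure \<Rightarrow> 'a set \<Rightarrow> bool" where
  "supported_on M V \<longleftrightarrow> emeasure M (space M - V) = 0"

end

theory Submission
  imports Defs
begin

text \<open>Suppose W is sectionally BV. For almost every v, the map u \<mapsto> g(\<phi> u) \<bullet> r(\<phi> v) is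
  BV, and the red vectors r(\<phi> v) of these good v span R^d, since otherwise the red marginal
  of \<mu> would be carried by a proper subspace. Being BV is preserved by linear combinations,
  so u \<mapsto> g(\<phi> u) \<bullet> w is BV for every w; symmetrically for the red coordinates. Hence \<phi> is
  a curve of bounded variation, i.e. a rectifiable curve in R^2d with 2d \<ge> 2, whose image is
  Lebesgue-null. But \<mu>, the push-forward of Uniform[0,1] under \<phi>, gives this image full
  mass, contradicting absolute continuity.\<close>

definition is_partition_0_to :: "nat \<Rightarrow> (nat \<Rightarrow> real) \<Rightarrow> real \<Rightarrow> bool" where
  "is_partition_0_to k t s \<longleftrightarrow> t 0 = 0 \<and> t k = s \<and> (\<forall>i<k. t i < t (Suc i))"

definition variation_sum :: "(real \<Rightarrow> real) \<Rightarrow> nat \<Rightarrow> (nat \<Rightarrow> real) \<Rightarrow> real" where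
  "variation_sum f k t = (\<Sum>i\<in>{1..k}. \<bar>f (t i) - f (t (i - 1))\<bar>)"

definition variation :: "(real \<Rightarrow> real) \<Rightarrow> real \<Rightarrow> real" where
  "variation f s = Sup {variation_sum f k t | k t. is_partition_0_to k t s}"

lemma BV01_iff_variation_sum_bounded:
  "BV01 f \<longleftrightarrow> (\<exists>B. \<forall>k t. is_partition_0_to k t 1 \<longrightarrow> variation_sum f k t \<le> B)"
  unfolding BV01_def is_partition_0_to_def variation_sum_def by blast

lemma is_partition_0_to_snoc:
  "is_partition_0_to k t s \<Longrightarrow> s < r \<Longrightarrow> is_partition_0_to (Suc k) (t(Suc k := r)) r"
  unfolding is_partition_0_to_def by (auto simp: less_Suc_eq)

lemma variation_sum_snoc:
  "variation_sum f (Suc k) (t(Suc k := r)) = variation_sum f k t + \<bar>f r - f (t k)\<bar>"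
proof -
  have "variation_sum f (Suc k) (t(Suc k := r))
      = (\<Sum>i\<in>{1..k}. \<bar>f ((t(Suc k := r)) i) - f ((t(Suc k := r)) (i - 1))\<bar>) + \<bar>f r - f (t k)\<bar>"
    unfolding variation_sum_def by (simp add: sum.atLeast1_atMost_eq)
  also have "(\<Sum>i\<in>{1..k}. \<bar>f ((t(Suc k := r)) i) - f ((t(Suc k := r)) (i - 1))\<bar>) = variation_sum f k t"
    unfolding variation_sum_def by (rule sum.cong) auto
  finally show ?thesis .
qed

lemma ex_partition_0_to: "0 \<le> s \<Longrightarrow> \<exists>k t. is_partition_0_to k t s"
proof (cases "s = 0")
  case True
  then have "is_partition_0_to 0 (\<lambda>_. 0) s" by (simp add: is_partition_0_to_def)
  then show ?thesis by blast
next
  case False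
  moreover assume "0 \<le> s"
  moreover have "is_partition_0_to 0 (\<lambda>_. 0) 0" by (simp add: is_partition_0_to_def)
  ultimately show ?thesis using is_partition_0_to_snoc[of 0 "\<lambda>_. 0" 0 s] by auto
qed

lemma bdd_above_variation_sums:
  assumes "BV01 f" "s \<le> 1"
  shows "bdd_above {variation_sum f k t | k t. is_partition_0_to k t s}"
proof -
  obtain B where B: "\<And>k t. is_partition_0_to k t 1 \<Longrightarrow> variation_sum f k t \<le> B"
    using assms(1) BV01_iff_variation_sum_bounded by blast
  have "variation_sum f k t \<le> B" if t: "is_partition_0_to k t s" for k t
  proof (cases "s = 1")
    case True
    then show ?thesis using B t by blast
  next
    case False
    with assms(2) have "s < 1" by simp
    have "t k = s" using t by (simp add: is_partition_0_to_def)
    then have "variation_sum f k t \<le> variation_sum f (Suc k) (t(Suc k := 1))"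
      by (simp add: variation_sum_snoc)
    also have "\<dots> \<le> B" using B is_partition_0_to_snoc[OF t \<open>s < 1\<close>] by blast
    finally show ?thesis .
  qed
  then show ?thesis by (auto simp: bdd_above_def)
qed

lemma variation_add_abs_diff_le:
  assumes "BV01 f" "0 \<le> s" "s < r" "r \<le> 1"
  shows "variation f s + \<bar>f r - f s\<bar> \<le> variation f r"
proof -
  have "x \<le> variation f r - \<bar>f r - f s\<bar>"
    if x_in: "x \<in> {variation_sum f k t | k t. is_partition_0_to k t s}" for x
  proof -
    obtain k t where x: "x = variation_sum f k t" and t: "is_partition_0_to k t s"
      using x_in by blast
    have "t k = s" using t by (simp add: is_partition_0_to_def)
    then have "x + \<bar>f r - f s\<bar> = variation_sum f (Suc k) (t(Suc k := r))"
      by (simp add: x variation_sum_snoc)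
    also have "\<dots> \<le> variation f r"
      unfolding variation_def
      by (rule cSup_upper[OF _ bdd_above_variation_sums[OF assms(1,4)]])
        (use is_partition_0_to_snoc[OF t \<open>s < r\<close>] in blast)
    finally show ?thesis by simp
  qed
  then have "variation f s \<le> variation f r - \<bar>f r - f s\<bar>"
    unfolding variation_def using ex_partition_0_to[OF \<open>0 \<le> s\<close>] by (blast intro: cSup_least)
  then show ?thesis by simp
qed

lemma BV01_zero: "BV01 (\<lambda>x. 0)"
  unfolding BV01_iff_variation_sum_bounded variation_sum_def by auto

lemma BV01_add:
  assumes "BV01 f" "BV01 g"
  shows "BV01 (\<lambda>x. f x + g x)"
proof -
  obtain B1 where B1: "\<And>k t. is_partition_0_to k t 1 \<Longrightarrow> variation_sum f k t \<le> B1"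
    using assms(1) BV01_iff_variation_sum_bounded by blast
  obtain B2 where B2: "\<And>k t. is_partition_0_to k t 1 \<Longrightarrow> variation_sum g k t \<le> B2"
    using assms(2) BV01_iff_variation_sum_bounded by blast
  have "variation_sum (\<lambda>x. f x + g x) k t \<le> variation_sum f k t + variation_sum g k t" for k t
    unfolding variation_sum_def sum.distrib[symmetric] by (rule sum_mono) linarith
  then have "is_partition_0_to k t 1 \<Longrightarrow> variation_sum (\<lambda>x. f x + g x) k t \<le> B1 + B2" for k t
    using B1 B2 by (fastforce intro: order_trans add_mono)
  then show ?thesis unfolding BV01_iff_variation_sum_bounded by blast
qed

lemma BV01_cmult:
  assumes "BV01 f"
  shows "BV01 (\<lambda>x. c * f x)"
proof -
  obtain B where B: "\<And>k t. is_partition_0_to k t 1 \<Longrightarrow> variation_sum f k t \<le> B"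
    using assms BV01_iff_variation_sum_bounded by blast
  have "variation_sum (\<lambda>x. c * f x) k t = \<bar>c\<bar> * variation_sum f k t" for k t
    unfolding variation_sum_def sum_distrib_left
    by (rule sum.cong) (auto simp: abs_mult right_diff_distrib[symmetric])
  then have "is_partition_0_to k t 1 \<Longrightarrow> variation_sum (\<lambda>x. c * f x) k t \<le> \<bar>c\<bar> * B" for k t
    using B by (simp add: mult_left_mono)
  then show ?thesis unfolding BV01_iff_variation_sum_bounded by blast
qed

lemma subspace_BV01_inner: "subspace {w. BV01 (\<lambda>u. F u \<bullet> w)}"
  unfolding subspace_def
  by (simp add: BV01_zero BV01_add BV01_cmult inner_add_right)

text \<open>\<phi> factors through V via a 1-Lipschitz map; placing the values of V on a line in R^2,
  a null set, makes the Lipschitz image theorem applicable.\<close>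
lemma negligible_image_dominated_by_real_function:
  fixes \<phi> :: "real \<Rightarrow> 'a::euclidean_space" and V :: "real \<Rightarrow> real"
  assumes dim: "2 \<le> DIM('a)"
    and dominated: "\<And>s t. s \<in> S \<Longrightarrow> t \<in> S \<Longrightarrow> norm (\<phi> t - \<phi> s) \<le> \<bar>V t - V s\<bar>"
  shows "negligible (\<phi> ` S)"
proof -
  define g where "g x = \<phi> (inv_into S V (fst x))" for x :: "real \<times> real"
  define L where "L = (\<lambda>t. (V t, 0::real)) ` S"
  have g: "g (V t, 0) = \<phi> t" if "t \<in> S" for t
  proof -
    have "inv_into S V (V t) \<in> S" "V (inv_into S V (V t)) = V t"
      using that by (auto intro: inv_into_into f_inv_into_f)
    with dominated[OF this(1) that] show ?thesis unfolding g_def by simp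
  qed
  have "L \<subseteq> {x. (0, 1) \<bullet> x = 0}" unfolding L_def by auto
  then have "negligible L"
    by (rule negligible_subset[OF negligible_hyperplane, rotated]) (simp add: zero_prod_def)
  have lipschitz: "norm (g y - g x) \<le> 1 * norm (y - x)" if xy: "x \<in> L" "y \<in> L" for x y
  proof -
    obtain s t where "s \<in> S" "t \<in> S" "x = (V s, 0)" "y = (V t, 0)"
      using xy unfolding L_def by blast
    then show ?thesis using dominated g by (simp add: norm_Pair)
  qed
  have "negligible (g ` L)"
  proof (rule negligible_locally_Lipschitz_image)
    show "DIM(real \<times> real) \<le> DIM('a)" using dim by simp
    show "\<exists>T B. open T \<and> x \<in> T \<and> (\<forall>y\<in>L \<inter> T. norm (g y - g x) \<le> B * norm (y - x))"
      if "x \<in> L" for x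
      using lipschitz that by (intro exI[of _ UNIV] exI[of _ 1]) simp
  qed fact
  moreover have "g ` L = \<phi> ` S" unfolding L_def image_image using g by simp
  ultimately show ?thesis by simp
qed

text \<open>The sum V of the coordinate variations dominates every increment of the curve.\<close>
lemma negligible_image_BV01_curve:
  fixes \<phi> :: "real \<Rightarrow> 'a::euclidean_space"
  assumes "2 \<le> DIM('a)" and bv: "\<And>b. b \<in> Basis \<Longrightarrow> BV01 (\<lambda>u. \<phi> u \<bullet> b)"
  shows "negligible (\<phi> ` {0..1})"
proof -
  define V where "V t = (\<Sum>b\<in>Basis. variation (\<lambda>u. \<phi> u \<bullet> b) t)" for t
  have increment: "norm (\<phi> t - \<phi> s) \<le> V t - V s" if "0 \<le> s" "s < t" "t \<le> 1" for s t
  proof -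
    have "norm (\<phi> t - \<phi> s) \<le> (\<Sum>b\<in>Basis. \<bar>\<phi> t \<bullet> b - \<phi> s \<bullet> b\<bar>)"
      using norm_le_l1[of "\<phi> t - \<phi> s"] by (simp add: inner_diff_left)
    also have "\<dots> \<le> (\<Sum>b\<in>Basis. variation (\<lambda>u. \<phi> u \<bullet> b) t - variation (\<lambda>u. \<phi> u \<bullet> b) s)"
    proof (rule sum_mono)
      fix b :: 'a
      assume "b \<in> Basis"
      from variation_add_abs_diff_le[OF bv[OF this] that]
      show "\<bar>\<phi> t \<bullet> b - \<phi> s \<bullet> b\<bar> \<le> variation (\<lambda>u. \<phi> u \<bullet> b) t - variation (\<lambda>u. \<phi> u \<bullet> b) s"
        by simp
    qed
    finally show ?thesis by (simp add: V_def sum_subtractf)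
  qed
  have dominated: "norm (\<phi> t - \<phi> s) \<le> \<bar>V t - V s\<bar>" if "s \<in> {0..1}" "t \<in> {0..1}" for s t
    using that increment[of s t] increment[of t s]
    by (cases s t rule: linorder_cases) (auto simp: norm_minus_commute)
  from assms(1) dominated show ?thesis by (rule negligible_image_dominated_by_real_function)
qed

lemma sets_unif01: "sets unif01 = sets (restrict_space lebesgue {0..1})"
  unfolding unif01_def by simp

lemma space_unif01 [simp]: "space unif01 = {0..1}"
  unfolding unif01_def by (simp add: space_restrict_space)

lemma emeasure_unif01_space: "emeasure unif01 {0..1} = 1"
  unfolding unif01_def
  by (rule emeasure_uniform_measure_1) (simp_all add: emeasure_restrict_space)

lemma AE_unif01_iff: "(AE v in unif01. P v) \<longleftrightarrow> (AE v in lebesgue. v \<in> {0..1} \<longrightarrow> P v)"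
proof -
  have "emeasure (restrict_space lebesgue {0..1}) {0..1::real} = 1"
    by (simp add: emeasure_restrict_space)
  then show ?thesis
    unfolding unif01_def by (simp add: AE_uniform_measure AE_restrict_space_iff)
qed

lemma span_image_eq_UNIV_if_not_supported_on_subspace:
  fixes \<psi> :: "real \<Rightarrow> 'a::euclidean_space"
  assumes \<psi>: "\<psi> \<in> borel_measurable unif01"
    and full: "\<forall>V. subspace V \<and> V \<noteq> UNIV \<longrightarrow> \<not> supported_on (distr unif01 borel \<psi>) V"
    and Q: "AE v in unif01. Q v"
  shows "span (\<psi> ` {v \<in> {0..1}. Q v}) = UNIV"
proof -
  define V where "V = span (\<psi> ` {v \<in> {0..1}. Q v})"
  have V: "V \<in> sets borel" unfolding V_def by (simp add: closed_subspace)
  have "AE v in unif01. \<psi> v \<in> V"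
    using AE_space Q by eventually_elim (auto simp: V_def intro: span_base)
  then have "AE x in distr unif01 borel \<psi>. x \<in> V"
    using V by (subst AE_distr_iff[OF \<psi>]) auto
  then have "supported_on (distr unif01 borel \<psi>) V"
    unfolding supported_on_def using V by (subst (asm) AE_iff_measurable[OF _ refl]) (auto simp: set_diff_eq)
  then show ?thesis using full unfolding V_def by blast
qed

lemma BV01_inner_if_AE_not_supported_on_subspace:
  fixes \<psi> :: "real \<Rightarrow> 'a::euclidean_space"
  assumes "\<psi> \<in> borel_measurable unif01"
    and "\<forall>V. subspace V \<and> V \<noteq> UNIV \<longrightarrow> \<not> supported_on (distr unif01 borel \<psi>) V"
    and "AE v in unif01. BV01 (\<lambda>u. F u \<bullet> \<psi> v)"
  shows "BV01 (\<lambda>u. F u \<bullet> w)"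
proof -
  have "span (\<psi> ` {v \<in> {0..1}. BV01 (\<lambda>u. F u \<bullet> \<psi> v)}) \<subseteq> {w. BV01 (\<lambda>u. F u \<bullet> w)}"
    by (intro span_minimal subspace_BV01_inner) auto
  then show ?thesis
    using span_image_eq_UNIV_if_not_supported_on_subspace[OF assms] by blast
qed

lemma not_absolutely_continuous_if_negligible_image:
  fixes \<psi> :: "real \<Rightarrow> 'a::euclidean_space"
  assumes \<psi>: "\<psi> \<in> borel_measurable unif01" and null: "negligible (\<psi> ` {0..1})"
  shows "\<not> absolutely_continuous lborel (distr unif01 borel \<psi>)"
proof
  obtain N where N: "N \<in> null_sets lborel" "\<psi> ` {0..1} \<subseteq> N"
    using null by (auto simp: negligible_iff_null_sets null_sets_completion_iff2)
  assume "absolutely_continuous lborel (distr unif01 borel \<psi>)"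
  with N(1) have "AE x in distr unif01 borel \<psi>. x \<notin> N"
    unfolding absolutely_continuous_def by (blast intro: AE_not_in)
  then have "AE v in unif01. \<psi> v \<notin> N"
    using N(1) by (subst (asm) AE_distr_iff[OF \<psi>]) auto
  with AE_space have "AE v in unif01. False"
    by eventually_elim (use N(2) in \<open>auto simp: image_subset_iff\<close>)
  then show False
    using emeasure_unif01_space by (simp add: eventually_False ae_filter_eq_bot_iff)
qed

theorem mainTheorem7:
  fixes \<rho> :: "((real^'n) \<times> (real^'n)) measure"
    and \<Lambda> :: real
    and \<mu> :: "((real^'n) \<times> (real^'n)) measure"
  assumes sets_rho: "sets \<rho> = sets borel"
    and finite_rho: "finite_measure \<rho>"
    and rho_on_Omega: "emeasure \<rho> (UNIV - Omega) = 0"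
    and Lambda_def: "\<Lambda> = measure \<rho> UNIV"
    and Lambda_pos: "\<Lambda> > 0"
    and mu_def: "\<mu> = scale_measure (ennreal (1 / \<Lambda>)) \<rho>"
    and abs_cont: "absolutely_continuous lborel \<mu>"
    and green_full: "\<forall>V. subspace V \<and> V \<noteq> UNIV \<longrightarrow> \<not> supported_on (distr \<mu> borel fst) V"
    and red_full: "\<forall>V. subspace V \<and> V \<noteq> UNIV \<longrightarrow> \<not> supported_on (distr \<mu> borel snd) V"
  shows "\<forall>\<phi> :: real \<Rightarrow> (real^'n) \<times> (real^'n).
           \<phi> \<in> measurable (restrict_space lebesgue {0..1}) borel \<and>
           \<phi> ` {0..1} \<subseteq> Omega \<and>
           distr unif01 borel \<phi> = \<mu>
           \<longrightarrow> \<not> sectionally_BV (\<lambda>u v. K (\<phi> u) (\<phi> v))"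
proof (intro allI impI notI)
  fix \<phi> :: "real \<Rightarrow> (real^'n) \<times> (real^'n)"
  assume "\<phi> \<in> measurable (restrict_space lebesgue {0..1}) borel \<and> \<phi> ` {0..1} \<subseteq> Omega \<and>
    distr unif01 borel \<phi> = \<mu>" and "sectionally_BV (\<lambda>u v. K (\<phi> u) (\<phi> v))"
  then have \<phi>: "\<phi> \<in> borel_measurable unif01" and \<mu>: "\<mu> = distr unif01 borel \<phi>"
    and AE_red: "AE v in unif01. BV01 (\<lambda>u. fst (\<phi> u) \<bullet> snd (\<phi> v))"
    and AE_green: "AE u in unif01. BV01 (\<lambda>v. snd (\<phi> v) \<bullet> fst (\<phi> u))"
    by (auto simp: measurable_cong_sets[OF sets_unif01] AE_unif01_iff sectionally_BV_def K_def
        inner_commute)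
  have fst_borel: "fst \<in> borel_measurable (borel :: ((real^'n) \<times> (real^'n)) measure)"
    and snd_borel: "snd \<in> borel_measurable (borel :: ((real^'n) \<times> (real^'n)) measure)"
    by (intro borel_measurable_continuous_onI continuous_intros)+
  have green_BV: "BV01 (\<lambda>u. fst (\<phi> u) \<bullet> w)" for w
    using red_full AE_red
    by (intro BV01_inner_if_AE_not_supported_on_subspace[where \<psi>="snd \<circ> \<phi>"]
        measurable_comp[OF \<phi> snd_borel]) (simp_all add: \<mu> distr_distr[OF snd_borel \<phi>])
  have red_BV: "BV01 (\<lambda>v. snd (\<phi> v) \<bullet> w)" for w
    using green_full AE_green
    by (intro BV01_inner_if_AE_not_supported_on_subspace[where \<psi>="fst \<circ> \<phi>"]
        measurable_comp[OF \<phi> fst_borel]) (simp_all add: \<mu> distr_distr[OF fst_borel \<phi>])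
  have "BV01 (\<lambda>u. \<phi> u \<bullet> w)" for w
    using BV01_add[OF green_BV red_BV] by (simp add: inner_prod_def)
  moreover have "2 \<le> DIM((real^'n) \<times> (real^'n))"
    using zero_less_card_finite[where 'a='n] unfolding DIM_prod DIM_cart DIM_real by linarith
  ultimately have "negligible (\<phi> ` {0..1})"
    using negligible_image_BV01_curve by blast
  with \<phi> abs_cont show False
    unfolding \<mu> using not_absolutely_continuous_if_negligible_image by blast
qed

end
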